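(* Let $\boldsymbol{P}\in\mathbb{R}^{n\times n}$, $\boldsymbol{A}=\mathrm{softmax}(\boldsymbol{P})$ and $\alpha=\max_{i,j}\lvert\boldsymbol{P}_{ij}\rvert$. For $\boldsymbol{X}\in\mathbb{R}^{n\times d}$ and $\boldsymbol{W}_V\in\mathbb{R}^{d\times d}$ define $\mathrm{SA}(\boldsymbol{X})=\boldsymbol{A}\boldsymbol{X}\boldsymbol{W}_V$. Then $$\lVert\mathrm{HC}[\mathrm{SA}(\boldsymbol{X})]\rVert_F\le\sqrt{\frac{n e^{2\alpha}}{e^{2\alpha}+n-1}}\;\lVert\boldsymbol{W}_V\rVert_2\,\lVert\mathrm{HC}[\boldsymbol{X}]\rVert_F .$$ Moreover, if $\boldsymbol{P}=\boldsymbol{X}\boldsymbol{W}_Q(\boldsymbol{X}\boldsymbol{W}_K)^T/\sqrt d$ with $\boldsymbol{W}_Q,\boldsymbol{W}_K\in\mathbb{R}^{d\times d_k}$, and the rows $\boldsymbol{x}_i$ of $\boldsymbol{X}$ satisfy $\lVert\boldsymbol{x}_i\rVert_2\le\gamma$ for all $i$ (some $\gamma>0$), then $\alpha\le\gamma^2\lVert\boldsymbol{W}_Q\boldsymbol{W}_K^T\rVert_2/\sqrt d$.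
   Context: $\mathrm{softmax}$ is applied row-wise: $\mathrm{softmax}(\boldsymbol{P})_{ij}=e^{\boldsymbol{P}_{ij}}/\sum_t e^{\boldsymbol{P}_{it}}$. $\boldsymbol{1}\in\mathbb{R}^n$ is the all-ones vector and for $\boldsymbol{X}\in\mathbb{R}^{n\times d}$, $\mathrm{HC}[\boldsymbol{X}]=(\boldsymbol{I}-\frac1n\boldsymbol{1}\boldsymbol{1}^T)\boldsymbol{X}$ (the high-frequency component, i.e. $\boldsymbol{X}$ minus its column means). $\lVert\cdot\rVert_F$ is the Frobenius norm and $\lVert\cdot\rVert_2$ the spectral norm. *)

theory Defs
  imports "HOL-Analysis.Analysis"
begin

text \<open>Matrices: an n x d real matrix is a value of type real^'d^'n
  (row i is X $ i), with n = CARD('n), d = CARD('d).\<close>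

definition softmax :: "real^'n^'m \<Rightarrow> real^'n^'m" where
  "softmax P = (\<chi> i j. exp (P $ i $ j) / (\<Sum>t\<in>UNIV. exp (P $ i $ t)))"

text \<open>High-frequency component: (I - (1/n) 1 1^T) X, i.e. X minus its column means.\<close>
definition HC :: "real^'d^'n \<Rightarrow> real^'d^'n" where
  "HC X = (\<chi> i k. X $ i $ k - (1 / real CARD('n)) * (\<Sum>j\<in>UNIV. X $ j $ k))"

definition frob_norm :: "real^'d^'n \<Rightarrow> real" where
  "frob_norm X = sqrt (\<Sum>i\<in>UNIV. \<Sum>j\<in>UNIV. (X $ i $ j)^2)"

definition spec_norm :: "real^'d^'n \<Rightarrow> real" where
  "spec_norm W = onorm (\<lambda>x. W *v x)"

definition max_abs_entry :: "real^'d^'n \<Rightarrow> real" where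
  "max_abs_entry P = Max {\<bar>P $ i $ j\<bar> | i j. True}"

definition SA :: "real^'n^'n \<Rightarrow> real^'d^'d \<Rightarrow> real^'d^'n \<Rightarrow> real^'d^'n" where
  "SA P WV X = (softmax P ** X) ** WV"

end

theory Submission
  imports Defs
begin

text \<open>Softmax rows are probability vectors, so \<open>A X = A HC[X] + 1 m\<^sup>T\<close> with \<open>m\<close> the column
  means of \<open>X\<close>; since \<open>HC\<close> kills such column-constant terms,
  \<open>HC[SA(X)] = HC[A HC[X] W\<^sub>V]\<close>. Now \<open>HC\<close> is an orthogonal projection, right multiplication
  by \<open>W\<^sub>V\<close> costs at most \<open>\<parallel>W\<^sub>V\<parallel>\<^sub>2\<close>, and for a row-stochastic \<open>A\<close> Jensen's inequality gives
  \<open>\<parallel>A Z\<parallel>\<^sub>F\<^sup>2 \<le> c \<parallel>Z\<parallel>\<^sub>F\<^sup>2\<close> whenever all column sums of \<open>A\<close> are at most \<open>c\<close>. As every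
  \<open>exp P\<^sub>i\<^sub>t\<close> lies in \<open>[e\<^sup>-\<^sup>\<alpha>, e\<^sup>\<alpha>]\<close>, a softmax entry is at most \<open>e\<^sup>2\<^sup>\<alpha> / (e\<^sup>2\<^sup>\<alpha> + n - 1)\<close>,
  which bounds the column sums by \<open>n\<close> times that. The bound on \<open>\<alpha>\<close> is Cauchy-Schwarz
  applied to \<open>P\<^sub>i\<^sub>j = x\<^sub>i\<^sup>T W\<^sub>Q W\<^sub>K\<^sup>T x\<^sub>j / \<surd>d\<close>.\<close>

lemma frob_norm_eq_norm: "frob_norm X = norm X"
  by (simp add: frob_norm_def norm_vec_def L2_set_def real_sqrt_pow2 sum_nonneg)

lemma norm_power2_vec: "(norm (x :: real^'d))\<^sup>2 = (\<Sum>j\<in>UNIV. (x $ j)\<^sup>2)"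
  by (simp add: norm_vec_def L2_set_def sum_nonneg)

lemma norm_power2_rows: "(norm (X :: real^'d^'n))\<^sup>2 = (\<Sum>i\<in>UNIV. (norm (X $ i))\<^sup>2)"
  by (simp add: norm_vec_def L2_set_def sum_nonneg)

lemma norm_power2_entries: "(norm (X :: real^'d^'n))\<^sup>2 = (\<Sum>i\<in>UNIV. \<Sum>k\<in>UNIV. (X $ i $ k)\<^sup>2)"
  by (simp add: norm_power2_rows norm_power2_vec)

lemma spec_norm_nonneg: "spec_norm W \<ge> 0"
  unfolding spec_norm_def by (rule onorm_pos_le) simp

lemma norm_matrix_vector_le_spec_norm: "norm (W *v x) \<le> spec_norm W * norm (x :: real^_)"
  unfolding spec_norm_def by (rule onorm) simp

lemma norm_transpose_vector_le_spec_norm: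
  fixes W :: "real^'d^'m"
  shows "norm (transpose W *v x) \<le> spec_norm W * norm x"
proof -
  let ?y = "transpose W *v x"
  have "(norm ?y)\<^sup>2 = inner (x v* W) ?y"
    by (simp add: power2_norm_eq_inner)
  also have "\<dots> = inner x (W *v ?y)"
    by (rule dot_lmul_matrix)
  also have "\<dots> \<le> norm x * norm (W *v ?y)"
    by (rule order_trans[OF abs_ge_self Cauchy_Schwarz_ineq2])
  also have "\<dots> \<le> norm x * (spec_norm W * norm ?y)"
    by (rule mult_left_mono[OF norm_matrix_vector_le_spec_norm]) simp
  finally have "norm ?y * norm ?y \<le> (spec_norm W * norm x) * norm ?y"
    by (simp add: power2_eq_square algebra_simps)
  then show ?thesis
    using spec_norm_nonneg[of W] by (cases "norm ?y = 0") auto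
qed

lemma row_matrix_mult: "((Z :: real^'d^'n) ** (W :: real^'e^'d)) $ i = transpose W *v (Z $ i)"
  by (simp add: vec_eq_iff matrix_matrix_mult_def matrix_vector_mult_def transpose_def mult.commute)

lemma norm_matrix_mult_le_spec_norm:
  "norm ((Z :: real^'d^'n) ** (W :: real^'e^'d)) \<le> norm Z * spec_norm W"
proof -
  have "(norm (Z ** W))\<^sup>2 = (\<Sum>i\<in>UNIV. (norm (transpose W *v (Z $ i)))\<^sup>2)"
    by (simp add: norm_power2_rows row_matrix_mult)
  also have "\<dots> \<le> (\<Sum>i\<in>UNIV. (spec_norm W * norm (Z $ i))\<^sup>2)"
    by (intro sum_mono power_mono norm_transpose_vector_le_spec_norm) simp
  also have "\<dots> = (norm Z * spec_norm W)\<^sup>2"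
    by (simp add: norm_power2_rows power_mult_distrib sum_distrib_left mult.commute)
  finally show ?thesis
    using spec_norm_nonneg[of W] by (simp add: power2_le_iff_abs_le)
qed

lemma weighted_mean_power2_le:
  fixes a z :: "'a \<Rightarrow> real"
  assumes "finite S" "\<And>j. j \<in> S \<Longrightarrow> a j \<ge> 0" "sum a S = 1"
  shows "(\<Sum>j\<in>S. a j * z j)\<^sup>2 \<le> (\<Sum>j\<in>S. a j * (z j)\<^sup>2)"
proof -
  define m where "m = (\<Sum>j\<in>S. a j * z j)"
  have "0 \<le> (\<Sum>j\<in>S. a j * (z j - m)\<^sup>2)"
    by (intro sum_nonneg mult_nonneg_nonneg assms) auto
  also have "\<dots> = (\<Sum>j\<in>S. a j * (z j)\<^sup>2) - 2 * m * (\<Sum>j\<in>S. a j * z j) + m\<^sup>2 * sum a S"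
    by (simp add: power2_diff algebra_simps sum.distrib sum_subtractf sum_distrib_left sum_distrib_right)
  also have "\<dots> = (\<Sum>j\<in>S. a j * (z j)\<^sup>2) - m\<^sup>2"
    using assms(3) by (simp add: m_def power2_eq_square)
  finally show ?thesis by (simp add: m_def)
qed

lemma norm_stochastic_matrix_mult_power2_le:
  fixes A :: "real^'n^'m" and Z :: "real^'d^'n"
  assumes nonneg: "\<And>i j. A $ i $ j \<ge> 0"
    and row_sum: "\<And>i. (\<Sum>j\<in>UNIV. A $ i $ j) = 1"
    and col_sum: "\<And>j. (\<Sum>i\<in>UNIV. A $ i $ j) \<le> c"
  shows "(norm (A ** Z))\<^sup>2 \<le> c * (norm Z)\<^sup>2"
proof -
  have "(norm (A ** Z))\<^sup>2 = (\<Sum>i\<in>UNIV. \<Sum>k\<in>UNIV. (\<Sum>j\<in>UNIV. A $ i $ j * Z $ j $ k)\<^sup>2)"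
    by (simp add: norm_power2_entries matrix_matrix_mult_def)
  also have "\<dots> \<le> (\<Sum>i\<in>UNIV. \<Sum>k\<in>UNIV. \<Sum>j\<in>UNIV. A $ i $ j * (Z $ j $ k)\<^sup>2)"
    by (intro sum_mono weighted_mean_power2_le) (auto simp: nonneg row_sum)
  also have "\<dots> = (\<Sum>j\<in>UNIV. \<Sum>k\<in>UNIV. (\<Sum>i\<in>UNIV. A $ i $ j) * (Z $ j $ k)\<^sup>2)"
  proof -
    have "(\<Sum>i\<in>UNIV. \<Sum>k\<in>UNIV. \<Sum>j\<in>UNIV. A $ i $ j * (Z $ j $ k)\<^sup>2)
        = (\<Sum>j\<in>UNIV. \<Sum>i\<in>UNIV. \<Sum>k\<in>UNIV. A $ i $ j * (Z $ j $ k)\<^sup>2)"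
      by (subst sum.swap) (rule sum.swap)
    also have "\<dots> = (\<Sum>j\<in>UNIV. \<Sum>k\<in>UNIV. \<Sum>i\<in>UNIV. A $ i $ j * (Z $ j $ k)\<^sup>2)"
      by (rule sum.cong[OF refl], rule sum.swap)
    finally show ?thesis by (simp add: sum_distrib_right)
  qed
  also have "\<dots> \<le> (\<Sum>j\<in>UNIV. \<Sum>k\<in>UNIV. c * (Z $ j $ k)\<^sup>2)"
    by (intro sum_mono mult_right_mono col_sum) simp
  also have "\<dots> = c * (norm Z)\<^sup>2"
    by (simp add: norm_power2_entries sum_distrib_left)
  finally show ?thesis .
qed

lemma HC_add_column_const:
  fixes Z1 Z2 :: "real^'d^'n"
  assumes "\<And>i k. Z1 $ i $ k = Z2 $ i $ k + c k"
  shows "HC Z1 = HC Z2"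
proof -
  have "(1 / real CARD('n)) * (\<Sum>j\<in>UNIV. Z1 $ j $ k)
      = (1 / real CARD('n)) * (\<Sum>j\<in>UNIV. Z2 $ j $ k) + c k" for k
    by (simp add: assms sum.distrib field_simps)
  then show ?thesis by (simp add: HC_def vec_eq_iff assms)
qed

lemma norm_HC_le: "norm (HC (Z :: real^'d^'n)) \<le> norm Z"
proof -
  have column: "(\<Sum>i\<in>UNIV. (Z $ i $ k - (1 / real CARD('n)) * (\<Sum>j\<in>UNIV. Z $ j $ k))\<^sup>2)
      \<le> (\<Sum>i\<in>UNIV. (Z $ i $ k)\<^sup>2)" for k
  proof -
    define m where "m = (1 / real CARD('n)) * (\<Sum>j\<in>UNIV. Z $ j $ k)"
    have "(\<Sum>i\<in>UNIV. (Z $ i $ k - m)\<^sup>2)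
        = (\<Sum>i\<in>UNIV. (Z $ i $ k)\<^sup>2) - 2 * m * (\<Sum>i\<in>UNIV. Z $ i $ k) + real CARD('n) * m\<^sup>2"
      by (simp add: power2_diff sum.distrib sum_subtractf sum_distrib_left algebra_simps)
    also have "\<dots> = (\<Sum>i\<in>UNIV. (Z $ i $ k)\<^sup>2) - real CARD('n) * m\<^sup>2"
      by (simp add: m_def power2_eq_square)
    finally show ?thesis by (simp add: m_def)
  qed
  have "(norm (HC Z))\<^sup>2 \<le> (norm Z)\<^sup>2"
    unfolding norm_power2_entries HC_def
    by (subst (1 2) sum.swap) (rule sum_mono, use column in simp)
  then show ?thesis by (simp add: power2_le_iff_abs_le)
qed

lemma HC_stochastic_mult:
  fixes A :: "real^'n^'m" and X :: "real^'d^'n" and W :: "real^'e^'d"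
  assumes row_sum: "\<And>i. (\<Sum>j\<in>UNIV. A $ i $ j) = 1"
  shows "HC ((A ** X) ** W) = HC ((A ** HC X) ** W)"
proof (rule HC_add_column_const)
  define m where "m k = (1 / real CARD('n)) * (\<Sum>j\<in>UNIV. X $ j $ k)" for k
  have AX: "(A ** X) $ i $ k = (A ** HC X) $ i $ k + m k" for i k
  proof -
    have "(A ** HC X) $ i $ k = (\<Sum>j\<in>UNIV. A $ i $ j * X $ j $ k) - m k * (\<Sum>j\<in>UNIV. A $ i $ j)"
      by (simp add: matrix_matrix_mult_def HC_def m_def right_diff_distrib sum_subtractf
          sum_distrib_right sum_divide_distrib algebra_simps)
    then show ?thesis using row_sum by (simp add: matrix_matrix_mult_def)
  qed
  fix i l
  show "((A ** X) ** W) $ i $ l = ((A ** HC X) ** W) $ i $ l + (\<Sum>k\<in>UNIV. m k * W $ k $ l)"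
    by (simp add: matrix_matrix_mult_def[of "A ** X"] matrix_matrix_mult_def[of "A ** HC X"] AX
        distrib_right sum.distrib)
qed

lemma abs_le_max_abs_entry: "\<bar>P $ i $ j\<bar> \<le> max_abs_entry (P :: real^'n^'m)"
proof -
  have entries: "{\<bar>P $ i $ j\<bar> | i j. True} = (\<lambda>(i, j). \<bar>P $ i $ j\<bar>) ` UNIV" by auto
  show ?thesis unfolding max_abs_entry_def entries by (rule Max_ge) auto
qed

lemma max_abs_entry_le:
  assumes "\<And>i j. \<bar>P $ i $ j\<bar> \<le> b"
  shows "max_abs_entry (P :: real^'n^'m) \<le> b"
proof -
  have "{\<bar>P $ i $ j\<bar> | i j. True} = (\<lambda>(i, j). \<bar>P $ i $ j\<bar>) ` UNIV" by auto
  then show ?thesis unfolding max_abs_entry_def using assms by (subst Max_le_iff) auto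
qed

lemma softmax_nonneg: "softmax P $ i $ j \<ge> 0"
  by (simp add: softmax_def sum_nonneg)

lemma softmax_row_sum: "(\<Sum>j\<in>UNIV. softmax P $ i $ j) = 1"
proof -
  have "(\<Sum>t\<in>UNIV. exp (P $ i $ t)) > 0" by (intro sum_pos) auto
  then show ?thesis by (simp add: softmax_def sum_divide_distrib[symmetric])
qed

lemma divide_add_right_mono:
  fixes a b c :: real
  assumes "0 < a" "a \<le> b" "0 \<le> c"
  shows "a / (a + c) \<le> b / (b + c)"
  using assms mult_right_mono[OF assms(2,3)] by (simp add: divide_simps algebra_simps)

lemma softmax_le:
  fixes P :: "real^'n^'m"
  defines "\<alpha> \<equiv> max_abs_entry P"
  shows "softmax P $ i $ j \<le> exp (2 * \<alpha>) / (exp (2 * \<alpha>) + real CARD('n) - 1)"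
proof -
  define S where "S = (\<Sum>t\<in>UNIV. exp (P $ i $ t))"
  define c where "c = (real CARD('n) - 1) * exp (- \<alpha>)"
  have "c \<ge> 0"
    by (simp add: c_def Suc_le_eq)
  have "exp (- \<alpha>) \<le> exp (P $ i $ t)" for t
    using abs_le_max_abs_entry[of P i t] by (simp add: \<alpha>_def)
  then have "real (card (UNIV - {j})) * exp (- \<alpha>) \<le> (\<Sum>t\<in>UNIV - {j}. exp (P $ i $ t))"
    by (intro sum_bounded_below) simp
  moreover have "real (card (UNIV - {j})) = real CARD('n) - 1"
    by (simp add: card_Diff_singleton of_nat_diff Suc_le_eq)
  moreover have "S = exp (P $ i $ j) + (\<Sum>t\<in>UNIV - {j}. exp (P $ i $ t))"
    by (simp add: S_def sum.remove)
  ultimately have S_ge: "exp (P $ i $ j) + c \<le> S"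
    by (simp add: c_def)
  have "softmax P $ i $ j = exp (P $ i $ j) / S"
    by (simp add: softmax_def S_def)
  also have "\<dots> \<le> exp (P $ i $ j) / (exp (P $ i $ j) + c)"
    using S_ge add_pos_nonneg[OF exp_gt_zero[of "P $ i $ j"] \<open>c \<ge> 0\<close>]
    by (intro divide_left_mono mult_pos_pos) (auto intro: order.strict_trans2)
  also have "\<dots> \<le> exp \<alpha> / (exp \<alpha> + c)"
    using abs_le_max_abs_entry[of P i j] \<open>c \<ge> 0\<close>
    by (intro divide_add_right_mono) (auto simp: \<alpha>_def)
  also have "\<dots> = exp (2 * \<alpha>) / (exp (2 * \<alpha>) + real CARD('n) - 1)"
    using exp_add[of \<alpha> \<alpha>] by (simp add: c_def exp_minus field_simps flip: mult_2)
  finally show ?thesis .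
qed

lemma frob_norm_HC_SA_le:
  fixes P :: "real^'n^'n" and X :: "real^'d^'n" and WV :: "real^'d^'d"
  shows "frob_norm (HC (SA P WV X))
           \<le> sqrt (real CARD('n) * exp (2 * max_abs_entry P)
                    / (exp (2 * max_abs_entry P) + real CARD('n) - 1))
             * spec_norm WV * frob_norm (HC X)"
proof -
  define A where "A = softmax P"
  define c where "c = real CARD('n) * exp (2 * max_abs_entry P)
                        / (exp (2 * max_abs_entry P) + real CARD('n) - 1)"
  have "(norm (A ** HC X))\<^sup>2 \<le> c * (norm (HC X))\<^sup>2"
  proof (rule norm_stochastic_matrix_mult_power2_le)
    show "(\<Sum>i\<in>UNIV. A $ i $ j) \<le> c" for j
      using sum_bounded_above[of UNIV "\<lambda>i. A $ i $ j"
          "exp (2 * max_abs_entry P) / (exp (2 * max_abs_entry P) + real CARD('n) - 1)"]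
        softmax_le[of P _ j]
      by (simp add: A_def c_def)
  qed (simp_all add: A_def softmax_nonneg softmax_row_sum)
  then have "sqrt ((norm (A ** HC X))\<^sup>2) \<le> sqrt (c * (norm (HC X))\<^sup>2)"
    by (rule real_sqrt_le_mono)
  then have AZ: "norm (A ** HC X) \<le> sqrt c * norm (HC X)"
    by (simp add: real_sqrt_mult)
  have "HC (SA P WV X) = HC ((A ** HC X) ** WV)"
    unfolding SA_def A_def by (rule HC_stochastic_mult) (rule softmax_row_sum)
  then have "frob_norm (HC (SA P WV X)) = norm (HC ((A ** HC X) ** WV))"
    by (simp add: frob_norm_eq_norm)
  also have "\<dots> \<le> norm (A ** HC X) * spec_norm WV"
    using norm_HC_le norm_matrix_mult_le_spec_norm by (rule order_trans)
  also have "\<dots> \<le> sqrt c * norm (HC X) * spec_norm WV"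
    using AZ spec_norm_nonneg by (rule mult_right_mono)
  finally show ?thesis
    by (simp add: c_def frob_norm_eq_norm mult_ac)
qed

lemma attention_score_entry:
  fixes X :: "real^'d^'n" and WQ WK :: "real^'k^'d"
  shows "((X ** WQ) ** transpose (X ** WK)) $ i $ j = inner (X $ i) ((WQ ** transpose WK) *v (X $ j))"
proof -
  have "(X ** WQ) ** transpose (X ** WK) = (X ** (WQ ** transpose WK)) ** transpose X"
    by (simp add: matrix_transpose_mul matrix_mul_assoc)
  moreover have "((X ** (WQ ** transpose WK)) ** transpose X) $ i $ j
      = inner ((X ** (WQ ** transpose WK)) $ i) (X $ j)"
    by (simp add: matrix_matrix_mult_def transpose_def inner_vec_def mult.commute)
  moreover have "(X ** (WQ ** transpose WK)) $ i = (X $ i) v* (WQ ** transpose WK)"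
    by (simp add: row_matrix_mult)
  ultimately show ?thesis by (simp add: dot_lmul_matrix)
qed

lemma max_abs_entry_attention_scores_le:
  fixes X :: "real^'d^'n" and WQ WK :: "real^'k^'d"
  assumes "s \<ge> 0" and rows: "\<And>i. norm (X $ i) \<le> \<gamma>"
  shows "max_abs_entry (s *\<^sub>R ((X ** WQ) ** transpose (X ** WK)))
           \<le> s * \<gamma>\<^sup>2 * spec_norm (WQ ** transpose WK)"
proof (rule max_abs_entry_le)
  fix i j
  define M where "M = WQ ** transpose WK"
  have "\<bar>inner (X $ i) (M *v (X $ j))\<bar> \<le> norm (X $ i) * norm (M *v (X $ j))"
    by (rule Cauchy_Schwarz_ineq2)
  also have "\<dots> \<le> \<gamma> * (spec_norm M * \<gamma>)"
  proof (rule mult_mono)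
    show "norm (M *v (X $ j)) \<le> spec_norm M * \<gamma>"
      using norm_matrix_vector_le_spec_norm mult_left_mono[OF rows spec_norm_nonneg] by (rule order_trans)
  qed (use rows order_trans[OF norm_ge_zero rows] in auto)
  finally have "\<bar>inner (X $ i) (M *v (X $ j))\<bar> \<le> \<gamma>\<^sup>2 * spec_norm M"
    by (simp add: power2_eq_square mult_ac)
  then show "\<bar>(s *\<^sub>R ((X ** WQ) ** transpose (X ** WK))) $ i $ j\<bar> \<le> s * \<gamma>\<^sup>2 * spec_norm M"
    using \<open>s \<ge> 0\<close> by (simp add: attention_score_entry M_def abs_mult mult_left_mono mult.assoc)
qed

theorem theorem3:
  fixes P :: "real^'n^'n" and X :: "real^'d^'n" and WV :: "real^'d^'d"
  shows "frob_norm (HC (SA P WV X))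
           \<le> sqrt (real CARD('n) * exp (2 * max_abs_entry P)
                    / (exp (2 * max_abs_entry P) + real CARD('n) - 1))
             * spec_norm WV * frob_norm (HC X)
         \<and> (\<forall>(WQ :: real^'k^'d) (WK :: real^'k^'d) (\<gamma> :: real).
              P = (1 / sqrt (real CARD('d))) *\<^sub>R ((X ** WQ) ** transpose (X ** WK))
              \<and> \<gamma> > 0 \<and> (\<forall>i. norm (X $ i) \<le> \<gamma>)
              \<longrightarrow> max_abs_entry P \<le> \<gamma>^2 * spec_norm (WQ ** transpose WK) / sqrt (real CARD('d)))"
proof (intro conjI allI impI)
  fix WQ WK :: "real^'k^'d" and \<gamma> :: real
  assume "P = (1 / sqrt (real CARD('d))) *\<^sub>R ((X ** WQ) ** transpose (X ** WK))
              \<and> \<gamma> > 0 \<and> (\<forall>i. norm (X $ i) \<le> \<gamma>)"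
  then show "max_abs_entry P \<le> \<gamma>^2 * spec_norm (WQ ** transpose WK) / sqrt (real CARD('d))"
    using max_abs_entry_attention_scores_le[of "1 / sqrt (real CARD('d))" X \<gamma> WQ WK] by simp
qed (rule frob_norm_HC_SA_le)

end
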